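(* An $r$-partite partition $\boldsymbol{\lambda}=(\lambda^0\mid\lambda^1\mid\cdots\mid\lambda^{r-1})$ of size $n$ is the cycle type of a square element of $G(r,1,n)$ (i.e. an element of the form $\pi^2$ with $\pi\in G(r,1,n)$) if and only if: (1) each even part in each partition $\lambda^t$ has even multiplicity; and (2) when $r$ is even, the odd parts of $\lambda^1,\lambda^3,\dots,\lambda^{r-1}$ have even multiplicity.
   Context: Let $\mathbb{Z}_r=\{\overline0,\dots,\overline{r-1}\}$. The generalized symmetric group is $G(r,1,n)=\{(z_1,\dots,z_n;\sigma): z_i\in\mathbb{Z}_r,\sigma\in S_n\}$ with product $(z_1,\dots,z_n;\sigma)(z'_1,\dots,z'_n;\sigma')=(z_1+z'_{\sigma^{-1}(1)},\dots,z_n+z'_{\sigma^{-1}(n)};\sigma\sigma')$. For $\pi=(z_1,\dots,z_n;\sigma)$ and a cycle $(u_1,\dots,u_\ell)$ of $\sigma$, its color is $z_{u_1}+\cdots+z_{u_\ell}\in\mathbb{Z}_r$. The cycle type of $\pi$ is the $r$-partite partition $(\lambda^0\mid\cdots\mid\lambda^{r-1})$ where $\lambda^j$ is the partition of the lengths of the cycles of $\sigma$ of color $j$; the sizes sum to $n$. Two elements are conjugate iff they have the same cycle type. *)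

theory Defs
  imports "HOL-Combinatorics.Permutations" "HOL-Library.Multiset"
begin

text \<open>Elements of G(r,1,n) are pairs (z, sigma): positions are 0..n-1 (instead of 1..n),
  z assigns to each position a colour in {0..r-1} (representing Z_r), extensionally 0 outside,
  and sigma is a permutation of {0..n-1}.\<close>

definition gsym :: "nat \<Rightarrow> nat \<Rightarrow> ((nat \<Rightarrow> nat) \<times> (nat \<Rightarrow> nat)) set" where
  "gsym r n = {(z, \<sigma>). (\<forall>i<n. z i < r) \<and> (\<forall>i\<ge>n. z i = 0) \<and> \<sigma> permutes {..<n}}"

definition gmult :: "nat \<Rightarrow> nat \<Rightarrow> ((nat \<Rightarrow> nat) \<times> (nat \<Rightarrow> nat)) \<Rightarrow> ((nat \<Rightarrow> nat) \<times> (nat \<Rightarrow> nat))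
     \<Rightarrow> ((nat \<Rightarrow> nat) \<times> (nat \<Rightarrow> nat))" where
  "gmult r n p q = (\<lambda>i. if i < n then (fst p i + fst q (inv (snd p) i)) mod r else 0,
                    snd p \<circ> snd q)"

definition perm_cycles :: "nat \<Rightarrow> (nat \<Rightarrow> nat) \<Rightarrow> nat set set" where
  "perm_cycles n \<sigma> = (\<lambda>i. {(\<sigma> ^^ k) i | k. True}) ` {..<n}"

definition cycle_color :: "nat \<Rightarrow> (nat \<Rightarrow> nat) \<Rightarrow> nat set \<Rightarrow> nat" where
  "cycle_color r z C = (\<Sum>i\<in>C. z i) mod r"

definition cycle_type :: "nat \<Rightarrow> nat \<Rightarrow> ((nat \<Rightarrow> nat) \<times> (nat \<Rightarrow> nat)) \<Rightarrow> nat \<Rightarrow> nat multiset" where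
  "cycle_type r n p j =
     image_mset card (mset_set {C \<in> perm_cycles n (snd p). cycle_color r (fst p) C = j})"

definition r_partite_partition :: "nat \<Rightarrow> nat \<Rightarrow> (nat \<Rightarrow> nat multiset) \<Rightarrow> bool" where
  "r_partite_partition r n lam \<longleftrightarrow> (\<forall>t<r. 0 \<notin># lam t) \<and> (\<Sum>t<r. sum_mset (lam t)) = n"

end

theory Submission
  imports Defs "HOL-Combinatorics.Orbits" "HOL-Combinatorics.Cycles"
begin

(* Record the cycle type of \<pi> = (z, \<sigma>) as the multiset of pairs (length, colour) of its
   cycles; squaring then acts cycle by cycle. The square has colour z i + z (\<sigma>\<inverse> i) at i,
   and we write z(X) for the sum of z over X. A \<sigma>-orbit of odd length is also a
   \<sigma>\<^sup>2-orbit, and its colour doubles. A \<sigma>-orbit C of even length 2m splits into two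
   \<sigma>\<^sup>2-orbits A and B = \<sigma> A of length m, each of colour z(A) + z(B) = z(C). Hence in a
   square the pairs (k, t) with k even, and for even r also those with t odd (2c mod r is
   even), occur with even multiplicity. Conversely, a multiset of coloured parts with these
   parities is built from such pieces: two copies of (k, t) come from a (2k)-cycle of
   colour t, and a single odd part (k, t) from a k-cycle whose colour c satisfies
   2c = t mod r, which exists because r is odd or t is even. Every multiset of coloured parts
   is realised by a product of disjoint coloured cycles, and squaring preserves the total
   length, so the square root lives in the same group. *)

section \<open>Orbits of the square of a permutation\<close>

lemma orbit_eq_of_mem:
  assumes "permutation f" "y \<in> orbit f x"
  shows "orbit f y = orbit f x"
  using orbit_cyclic_eq3[OF cyclic_on_orbit'[OF assms(1)] assms(2)] .

lemma finite_orbit_permutation: "permutation f \<Longrightarrow> finite (orbit f x)"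
  by (simp add: finite_orbit permutation_self_in_orbit)

lemma image_orbit_permutation: "permutation f \<Longrightarrow> f ` orbit f x = orbit f x"
  using orbit_inverse[of x f f f] permutation_self_in_orbit permutation_orbit_step by metis

lemma card_orbit_eq_least_power:
  assumes "permutation f"
  shows "card (orbit f x) = least_power f x"
proof -
  have "orbit f x = set (support f x)"
    using orbit_altdef_permutation[OF assms] support_set[OF assms] by auto
  then show ?thesis
    using distinct_card[OF cycle_of_permutation[OF assms]] by simp
qed

lemma funpow_eq_iff_mod_card_orbit:
  assumes "permutation f"
  shows "(f ^^ i) x = (f ^^ j) x \<longleftrightarrow> i mod card (orbit f x) = j mod card (orbit f x)"
proof -
  have *: "(f ^^ i) x = (f ^^ j) x \<longleftrightarrow> j mod card (orbit f x) = i mod card (orbit f x)"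
    if "i \<le> j" for i j
  proof -
    have "(f ^^ j) x = (f ^^ i) ((f ^^ (j - i)) x)"
      using that by (metis funpow_add le_add_diff_inverse o_apply)
    then have "(f ^^ i) x = (f ^^ j) x \<longleftrightarrow> (f ^^ (j - i)) x = x"
      using funpow_diff[OF bij_is_inj[OF permutation_bijective[OF assms]] that] by metis
    also have "\<dots> \<longleftrightarrow> least_power f x dvd j - i"
      using least_power_dvd[OF assms] by simp
    also have "\<dots> \<longleftrightarrow> j mod card (orbit f x) = i mod card (orbit f x)"
      using that by (simp add: card_orbit_eq_least_power[OF assms] mod_eq_dvd_iff_nat)
    finally show ?thesis .
  qed
  show ?thesis
    using *[of i j] *[of j i] by (cases "i \<le> j") auto
qed

lemma funpow_comp_self: "(f \<circ> f) ^^ n = f ^^ (2 * n)"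
  by (induction n) (simp_all add: comp_assoc)

lemma orbit_comp_self_subset: "orbit (f \<circ> f) x \<subseteq> orbit f x"
  unfolding orbit_altdef funpow_comp_self by fastforce

lemma orbit_comp_self_altdef:
  "permutation f \<Longrightarrow> orbit (f \<circ> f) x = {(f ^^ (2 * k)) x | k. True}"
  by (simp add: orbit_altdef_permutation permutation_compose funpow_comp_self)

lemma image_orbit_comp_self:
  "permutation f \<Longrightarrow> f ` orbit (f \<circ> f) x = orbit (f \<circ> f) (f x)"
  by (intro orbit_inverse) (simp_all add: permutation_self_in_orbit permutation_compose)

lemma orbit_eq_of_mem_orbit_comp_self:
  assumes "permutation f" "y \<in> orbit (f \<circ> f) x"
  shows "orbit f y = orbit f x"
  using assms orbit_comp_self_subset orbit_eq_of_mem by fast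

lemma orbit_comp_self_odd:
  assumes "permutation f" "odd (card (orbit f x))"
  shows "orbit (f \<circ> f) x = orbit f x"
proof
  show "orbit f x \<subseteq> orbit (f \<circ> f) x"
  proof
    fix y assume "y \<in> orbit f x"
    then obtain k where y: "y = (f ^^ k) x"
      using orbit_altdef_permutation[OF assms(1)] by blast
    let ?p = "card (orbit f x)"
    have "even (k + ?p * k)"
      using assms(2) by simp
    then obtain m where m: "k + ?p * k = 2 * m" ..
    have "y = (f ^^ (k + ?p * k)) x"
      unfolding y funpow_eq_iff_mod_card_orbit[OF assms(1)] by simp
    then show "y \<in> orbit (f \<circ> f) x"
      unfolding m orbit_comp_self_altdef[OF assms(1)] by blast
  qed
qed (rule orbit_comp_self_subset)

lemma funpow_even_neq_funpow_odd:
  assumes "permutation f" "even (card (orbit f x))"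
  shows "(f ^^ (2 * a)) x \<noteq> (f ^^ Suc (2 * b)) x"
proof
  have even_mod: "even (m mod card (orbit f x)) \<longleftrightarrow> even m" for m
    using assms(2) by (simp add: dvd_mod_iff)
  assume "(f ^^ (2 * a)) x = (f ^^ Suc (2 * b)) x"
  then have "2 * a mod card (orbit f x) = Suc (2 * b) mod card (orbit f x)"
    using funpow_eq_iff_mod_card_orbit[OF assms(1)] by blast
  then have "even (2 * a mod card (orbit f x)) \<longleftrightarrow> even (Suc (2 * b) mod card (orbit f x))"
    by (rule arg_cong)
  then show False
    unfolding even_mod by simp
qed

lemma orbit_comp_self_even:
  assumes "permutation f" "even (card (orbit f x))"
  shows "orbit (f \<circ> f) x \<inter> orbit (f \<circ> f) (f x) = {}"
    and "orbit (f \<circ> f) x \<union> orbit (f \<circ> f) (f x) = orbit f x"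
proof -
  have odd_step: "(f ^^ (2 * k)) (f x) = (f ^^ Suc (2 * k)) x" for k
    by (simp add: funpow_swap1)
  show "orbit (f \<circ> f) x \<inter> orbit (f \<circ> f) (f x) = {}"
  proof (rule equals0I)
    fix y assume "y \<in> orbit (f \<circ> f) x \<inter> orbit (f \<circ> f) (f x)"
    then obtain a b where "y = (f ^^ (2 * a)) x" "y = (f ^^ Suc (2 * b)) x"
      unfolding orbit_comp_self_altdef[OF assms(1)] odd_step by blast
    then show False
      using funpow_even_neq_funpow_odd[OF assms] by metis
  qed
  show "orbit (f \<circ> f) x \<union> orbit (f \<circ> f) (f x) = orbit f x"
  proof
    show "orbit (f \<circ> f) x \<union> orbit (f \<circ> f) (f x) \<subseteq> orbit f x"
      using orbit_comp_self_subset[of f x] orbit_comp_self_subset[of f "f x"]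
      unfolding permutation_orbit_step[OF assms(1)] by (rule Un_least)
    show "orbit f x \<subseteq> orbit (f \<circ> f) x \<union> orbit (f \<circ> f) (f x)"
    proof
      fix y assume "y \<in> orbit f x"
      then obtain k where y: "y = (f ^^ k) x"
        using orbit_altdef_permutation[OF assms(1)] by blast
      show "y \<in> orbit (f \<circ> f) x \<union> orbit (f \<circ> f) (f x)"
      proof (cases "even k")
        case True
        then obtain m where "k = 2 * m" ..
        then show ?thesis
          unfolding orbit_comp_self_altdef[OF assms(1)] y by blast
      next
        case False
        then obtain m where "k = Suc (2 * m)" by (rule oddE) simp
        then show ?thesis
          unfolding orbit_comp_self_altdef[OF assms(1)] odd_step y by blast
      qed
    qed
  qed
qed

lemma orbits_comp_self_odd:
  assumes "permutation f" "odd (card (orbit f x))"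
  shows "orbit (f \<circ> f) ` orbit f x = {orbit f x}"
proof -
  have "orbit (f \<circ> f) y = orbit f x" if "y \<in> orbit f x" for y
  proof -
    have "y \<in> orbit (f \<circ> f) x"
      using that unfolding orbit_comp_self_odd[OF assms] .
    then have "orbit (f \<circ> f) y = orbit (f \<circ> f) x"
      by (rule orbit_eq_of_mem[OF permutation_compose[OF assms(1) assms(1)]])
    then show ?thesis
      unfolding orbit_comp_self_odd[OF assms] .
  qed
  then have "orbit (f \<circ> f) ` orbit f x = (\<lambda>y. orbit f x) ` orbit f x"
    by (rule image_cong[OF refl])
  also have "\<dots> = {orbit f x}"
    by (rule image_constant[OF permutation_self_in_orbit[OF assms(1)]])
  finally show ?thesis .
qed

lemma orbits_comp_self_even:
  assumes "permutation f" "even (card (orbit f x))"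
  shows "orbit (f \<circ> f) ` orbit f x = {orbit (f \<circ> f) x, orbit (f \<circ> f) (f x)}"
proof
  have ff: "permutation (f \<circ> f)"
    using permutation_compose[OF assms(1) assms(1)] .
  show "orbit (f \<circ> f) ` orbit f x \<subseteq> {orbit (f \<circ> f) x, orbit (f \<circ> f) (f x)}"
  proof (rule image_subsetI)
    fix y assume "y \<in> orbit f x"
    then have "y \<in> orbit (f \<circ> f) x \<or> y \<in> orbit (f \<circ> f) (f x)"
      unfolding orbit_comp_self_even(2)[OF assms, symmetric] by simp
    then show "orbit (f \<circ> f) y \<in> {orbit (f \<circ> f) x, orbit (f \<circ> f) (f x)}"
      using orbit_eq_of_mem[OF ff] by auto
  qed
  have "x \<in> orbit f x"
    by (rule permutation_self_in_orbit[OF assms(1)])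
  moreover have "f x \<in> orbit f x"
    by (rule orbit.base)
  ultimately show "{orbit (f \<circ> f) x, orbit (f \<circ> f) (f x)} \<subseteq> orbit (f \<circ> f) ` orbit f x"
    by simp
qed

lemma card_orbit_comp_self_even:
  assumes "permutation f" "even (card (orbit f x))"
  shows "card (orbit (f \<circ> f) x) = card (orbit f x) div 2"
    and "card (orbit (f \<circ> f) (f x)) = card (orbit f x) div 2"
proof -
  have "inj_on f (orbit (f \<circ> f) x)"
    using bij_is_inj[OF permutation_bijective[OF assms(1)]] by (rule inj_on_subset) simp
  then have same: "card (orbit (f \<circ> f) (f x)) = card (orbit (f \<circ> f) x)"
    unfolding image_orbit_comp_self[OF assms(1), symmetric] by (rule card_image)
  have "finite (orbit (f \<circ> f) x)" "finite (orbit (f \<circ> f) (f x))"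
    using finite_orbit_permutation[OF assms(1), of x]
    unfolding orbit_comp_self_even(2)[OF assms, symmetric] by simp_all
  then have "card (orbit (f \<circ> f) x \<union> orbit (f \<circ> f) (f x))
      = card (orbit (f \<circ> f) x) + card (orbit (f \<circ> f) (f x))"
    using orbit_comp_self_even(1)[OF assms] by (rule card_Un_disjoint)
  then have "card (orbit (f \<circ> f) x) + card (orbit (f \<circ> f) (f x)) = card (orbit f x)"
    unfolding orbit_comp_self_even(2)[OF assms] by simp
  then show "card (orbit (f \<circ> f) x) = card (orbit f x) div 2"
    and "card (orbit (f \<circ> f) (f x)) = card (orbit f x) div 2"
    unfolding same by simp_all
qed

section \<open>Coloured cycle types of squares\<close>

lemma perm_cycles_eq_orbits:
  assumes "\<sigma> permutes {..<n}"
  shows "perm_cycles n \<sigma> = orbit \<sigma> ` {..<n}"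
proof -
  have "permutation \<sigma>"
    using assms permutation_permutes by blast
  then show ?thesis
    unfolding perm_cycles_def by (simp add: orbit_altdef_permutation)
qed

lemma UN_perm_cycles:
  assumes "\<sigma> permutes {..<n}"
  shows "\<Union> (perm_cycles n \<sigma>) = {..<n}"
proof -
  have "permutation \<sigma>"
    using assms permutation_permutes by blast
  then show ?thesis
    unfolding perm_cycles_eq_orbits[OF assms]
    using permutes_orbit_subset[OF assms] permutation_self_in_orbit by fastforce
qed

lemma cycle_color_square:
  assumes "\<sigma> permutes {..<n}" "\<sigma> ` E = D" "D \<subseteq> {..<n}"
  shows "cycle_color r (fst (gmult r n (z, \<sigma>) (z, \<sigma>))) D = (sum z D + sum z E) mod r"
proof -
  have "(\<Sum>i\<in>D. z (inv \<sigma> i)) = (\<Sum>j\<in>E. z (inv \<sigma> (\<sigma> j)))"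
    unfolding assms(2)[symmetric]
    by (rule sum.reindex_cong[OF inj_on_subset[OF permutes_inj[OF assms(1)]]]) auto
  also have "\<dots> = sum z E"
    using permutes_inverses(2)[OF assms(1)] by simp
  finally have inv_sum: "(\<Sum>i\<in>D. z (inv \<sigma> i)) = sum z E" .
  have "cycle_color r (fst (gmult r n (z, \<sigma>) (z, \<sigma>))) D = (\<Sum>i\<in>D. (z i + z (inv \<sigma> i)) mod r) mod r"
    unfolding cycle_color_def gmult_def using assms(3) by (intro arg_cong[where f="\<lambda>x. x mod r"] sum.cong) auto
  also have "\<dots> = (\<Sum>i\<in>D. z i + z (inv \<sigma> i)) mod r"
    by (rule mod_sum_eq)
  finally show ?thesis
    by (simp add: sum.distrib inv_sum)
qed

definition colored_cycle_type :: "nat \<Rightarrow> nat \<Rightarrow> (nat \<Rightarrow> nat) \<times> (nat \<Rightarrow> nat) \<Rightarrow> (nat \<times> nat) multiset"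
  where "colored_cycle_type r n \<pi> = (\<Sum>C\<in>perm_cycles n (snd \<pi>). {#(card C, cycle_color r (fst \<pi>) C)#})"

fun square_parts :: "nat \<Rightarrow> nat \<times> nat \<Rightarrow> (nat \<times> nat) multiset" where
  "square_parts r (l, c) = (if odd l then {#(l, 2 * c mod r)#} else {#(l div 2, c), (l div 2, c)#})"

definition squared_type :: "nat \<Rightarrow> (nat \<times> nat) multiset \<Rightarrow> (nat \<times> nat) multiset"
  where "squared_type r M = (\<Sum>x\<in>#M. square_parts r x)"

lemma squared_type_sum:
  "squared_type r (\<Sum>C\<in>P. {#g C#}) = (\<Sum>C\<in>P. square_parts r (g C))"
  by (induction P rule: infinite_finite_induct) (simp_all add: squared_type_def)

lemma cycle_color_square_even:
  assumes "\<sigma> permutes {..<n}" "x < n" "even (card (orbit \<sigma> x))"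
  shows "cycle_color r (fst (gmult r n (z, \<sigma>) (z, \<sigma>))) (orbit (\<sigma> \<circ> \<sigma>) x) = cycle_color r z (orbit \<sigma> x)"
    and "cycle_color r (fst (gmult r n (z, \<sigma>) (z, \<sigma>))) (orbit (\<sigma> \<circ> \<sigma>) (\<sigma> x)) = cycle_color r z (orbit \<sigma> x)"
proof -
  define A where "A = orbit (\<sigma> \<circ> \<sigma>) x"
  define B where "B = orbit (\<sigma> \<circ> \<sigma>) (\<sigma> x)"
  have perm: "permutation \<sigma>"
    using assms(1) permutation_permutes by blast
  have split: "A \<inter> B = {}" "A \<union> B = orbit \<sigma> x"
    unfolding A_def B_def using orbit_comp_self_even[OF perm assms(3)] by simp_all
  have "\<sigma> ` A = B"
    unfolding A_def B_def by (rule image_orbit_comp_self[OF perm])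
  have "\<sigma> ` B = A"
    unfolding A_def B_def image_orbit_comp_self[OF perm]
    using permutation_orbit_step[OF permutation_compose[OF perm perm], of x] by simp
  have "finite A" "finite B"
    using finite_orbit_permutation[OF perm, of x] unfolding split(2)[symmetric] by simp_all
  then have sum_AB: "sum z A + sum z B = sum z (orbit \<sigma> x)"
    unfolding split(2)[symmetric] using sum.union_disjoint[of A B z] split(1) by simp
  have "A \<subseteq> {..<n}" "B \<subseteq> {..<n}"
    using split(2) permutes_orbit_subset[OF assms(1)] assms(2) by auto
  then have "cycle_color r (fst (gmult r n (z, \<sigma>) (z, \<sigma>))) A = (sum z A + sum z B) mod r"
    and "cycle_color r (fst (gmult r n (z, \<sigma>) (z, \<sigma>))) B = (sum z B + sum z A) mod r"
    using cycle_color_square[OF assms(1) \<open>\<sigma> ` B = A\<close>]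
      cycle_color_square[OF assms(1) \<open>\<sigma> ` A = B\<close>] by simp_all
  then show "cycle_color r (fst (gmult r n (z, \<sigma>) (z, \<sigma>))) (orbit (\<sigma> \<circ> \<sigma>) x) = cycle_color r z (orbit \<sigma> x)"
    and "cycle_color r (fst (gmult r n (z, \<sigma>) (z, \<sigma>))) (orbit (\<sigma> \<circ> \<sigma>) (\<sigma> x)) = cycle_color r z (orbit \<sigma> x)"
    unfolding cycle_color_def sum_AB[symmetric] A_def[symmetric] B_def[symmetric]
    by (simp_all add: add.commute)
qed

lemma square_parts_of_cycle:
  assumes "\<sigma> permutes {..<n}" "x < n"
  defines "C \<equiv> orbit \<sigma> x"
  shows "(\<Sum>D\<in>orbit (\<sigma> \<circ> \<sigma>) ` C. {#(card D, cycle_color r (fst (gmult r n (z, \<sigma>) (z, \<sigma>))) D)#})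
       = square_parts r (card C, cycle_color r z C)"
proof -
  let ?col = "cycle_color r (fst (gmult r n (z, \<sigma>) (z, \<sigma>)))"
  have perm: "permutation \<sigma>"
    using assms(1) permutation_permutes by blast
  show ?thesis
  proof (cases "odd (card C)")
    case True
    have "C \<subseteq> {..<n}"
      unfolding C_def using permutes_orbit_subset[OF assms(1)] assms(2) by simp
    then have "?col C = (sum z C + sum z C) mod r"
      using cycle_color_square[OF assms(1)] image_orbit_permutation[OF perm] C_def by blast
    also have "\<dots> = 2 * cycle_color r z C mod r"
      unfolding cycle_color_def by (simp add: mult_2 mod_add_eq)
    finally show ?thesis
      using orbits_comp_self_odd[OF perm True[unfolded C_def]] True by (simp add: C_def)
  next
    case False
    then have even: "even (card (orbit \<sigma> x))"
      unfolding C_def by simp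
    have "x \<in> orbit (\<sigma> \<circ> \<sigma>) x"
      by (rule permutation_self_in_orbit[OF permutation_compose[OF perm perm]])
    then have "orbit (\<sigma> \<circ> \<sigma>) x \<noteq> orbit (\<sigma> \<circ> \<sigma>) (\<sigma> x)"
      using orbit_comp_self_even(1)[OF perm even] by blast
    then show ?thesis
      using False orbits_comp_self_even[OF perm even] card_orbit_comp_self_even[OF perm even]
        cycle_color_square_even[OF assms(1,2) even]
      unfolding C_def by simp
  qed
qed

lemma colored_cycle_type_square:
  assumes "\<pi> \<in> gsym r n"
  shows "colored_cycle_type r n (gmult r n \<pi> \<pi>) = squared_type r (colored_cycle_type r n \<pi>)"
proof -
  obtain z \<sigma> where \<pi>: "\<pi> = (z, \<sigma>)" and \<sigma>: "\<sigma> permutes {..<n}"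
    using assms by (cases \<pi>) (auto simp: gsym_def)
  have perm: "permutation \<sigma>"
    using \<sigma> permutation_permutes by blast
  let ?P = "perm_cycles n \<sigma>"
  let ?sq = "\<lambda>C. orbit (\<sigma> \<circ> \<sigma>) ` C"
  let ?part = "\<lambda>D. {#(card D, cycle_color r (fst (gmult r n \<pi> \<pi>)) D)#}"
  have cycles_sq: "perm_cycles n (\<sigma> \<circ> \<sigma>) = (\<Union>C\<in>?P. ?sq C)"
    unfolding perm_cycles_eq_orbits[OF permutes_compose[OF \<sigma> \<sigma>]]
    by (subst UN_perm_cycles[OF \<sigma>, symmetric]) (rule image_Union)
  have cycle_eq: "C = orbit \<sigma> w" if "C \<in> ?P" "w \<in> C" for C w
    using that orbit_eq_of_mem[OF perm] unfolding perm_cycles_eq_orbits[OF \<sigma>] by auto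
  have disjoint: "?sq C \<inter> ?sq C' = {}" if "C \<in> ?P" "C' \<in> ?P" "C \<noteq> C'" for C C'
  proof (rule equals0I)
    fix D assume "D \<in> ?sq C \<inter> ?sq C'"
    then obtain w w' where w: "w \<in> C" "w' \<in> C'" and D: "D = orbit (\<sigma> \<circ> \<sigma>) w" "D = orbit (\<sigma> \<circ> \<sigma>) w'"
      by blast
    have "w \<in> orbit (\<sigma> \<circ> \<sigma>) w'"
      using D permutation_self_in_orbit[OF permutation_compose[OF perm perm], of w] by simp
    then have "orbit \<sigma> w = orbit \<sigma> w'"
      by (rule orbit_eq_of_mem_orbit_comp_self[OF perm])
    then show False
      using cycle_eq[OF that(1) w(1)] cycle_eq[OF that(2) w(2)] that(3) by simp
  qed
  have finite: "finite ?P"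
    unfolding perm_cycles_eq_orbits[OF \<sigma>] by simp
  have finite_cycle: "finite C" if "C \<in> ?P" for C
    using that UN_perm_cycles[OF \<sigma>] by (intro finite_subset[of C "{..<n}"]) auto
  have "colored_cycle_type r n (gmult r n \<pi> \<pi>) = (\<Sum>D\<in>(\<Union>C\<in>?P. ?sq C). ?part D)"
    unfolding colored_cycle_type_def by (simp add: \<pi> gmult_def cycles_sq)
  also have "\<dots> = (\<Sum>C\<in>?P. \<Sum>D\<in>?sq C. ?part D)"
    using finite finite_cycle disjoint by (intro sum.UNION_disjoint) auto
  also have "\<dots> = (\<Sum>C\<in>?P. square_parts r (card C, cycle_color r z C))"
  proof (rule sum.cong[OF refl])
    fix C assume "C \<in> ?P"
    then obtain x where "x < n" "C = orbit \<sigma> x"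
      unfolding perm_cycles_eq_orbits[OF \<sigma>] by blast
    then show "(\<Sum>D\<in>?sq C. ?part D) = square_parts r (card C, cycle_color r z C)"
      using square_parts_of_cycle[OF \<sigma>] by (simp add: \<pi>)
  qed
  also have "\<dots> = squared_type r (colored_cycle_type r n \<pi>)"
    unfolding colored_cycle_type_def squared_type_sum by (simp add: \<pi>)
  finally show ?thesis .
qed

section \<open>Realising coloured cycle types\<close>

lemma orbit_cycle_of_list:
  assumes "distinct cs" "cs \<noteq> []"
  shows "orbit (cycle_of_list cs) (hd cs) = set cs"
proof
  show "orbit (cycle_of_list cs) (hd cs) \<subseteq> set cs"
    using permutes_orbit_subset[OF cycle_permutes] hd_in_set[OF assms(2)] .
  show "set cs \<subseteq> orbit (cycle_of_list cs) (hd cs)"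
  proof
    fix y assume "y \<in> set cs"
    then obtain j where j: "j < length cs" "y = cs ! j"
      by (auto simp: in_set_conv_nth)
    have "(cycle_of_list cs ^^ j) (hd cs) = map (cycle_of_list cs ^^ j) cs ! 0"
      using assms(2) by (simp add: hd_conv_nth)
    also have "\<dots> = rotate j cs ! 0"
      unfolding cyclic_rotation[OF assms(1)] ..
    also have "\<dots> = y"
      using j assms(2) by (simp add: nth_rotate)
    finally show "y \<in> orbit (cycle_of_list cs) (hd cs)"
      unfolding orbit_altdef_permutation[OF permutation_of_cycle] by blast
  qed
qed

lemma perm_cycles_add_cycle:
  assumes "\<sigma> permutes {..<n}" "0 < l"
  shows "perm_cycles (n + l) (cycle_of_list [n..<n + l] \<circ> \<sigma>) = insert {n..<n + l} (perm_cycles n \<sigma>)"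
proof -
  let ?c = "cycle_of_list [n..<n + l]"
  let ?\<tau> = "?c \<circ> \<sigma>"
  have c: "?c permutes {n..<n + l}"
    using cycle_permutes[of "[n..<n + l]"] by simp
  have \<tau>: "?\<tau> permutes {..<n + l}"
    by (rule permutes_compose[OF permutes_subset[OF assms(1)] permutes_subset[OF c]]) auto
  have perm_\<sigma>: "permutation \<sigma>" and perm_\<tau>: "permutation ?\<tau>"
    using assms(1) \<tau> permutation_permutes by blast+
  have low: "orbit ?\<tau> i = orbit \<sigma> i" if "i < n" for i
  proof (rule orbit_cong[OF permutation_self_in_orbit[OF perm_\<sigma>]])
    fix s assume "s \<in> orbit \<sigma> i"
    then have "\<sigma> s < n"
      using permutes_orbit_subset[OF assms(1)] permutes_in_image[OF assms(1)] that by blast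
    then show "?\<tau> s = \<sigma> s"
      by (simp add: id_outside_supp)
  qed
  have "orbit ?\<tau> n = orbit ?c n"
  proof (rule orbit_cong[OF permutation_self_in_orbit[OF permutation_of_cycle]])
    fix s assume "s \<in> orbit ?c n"
    moreover have "n \<in> {n..<n + l}"
      using assms(2) by simp
    ultimately have "s \<in> {n..<n + l}"
      using permutes_orbit_subset[OF c] by blast
    then show "?\<tau> s = ?c s"
      using permutes_not_in[OF assms(1)] by simp
  qed
  also have "\<dots> = {n..<n + l}"
    using orbit_cycle_of_list[of "[n..<n + l]"] assms(2) by simp
  finally have high: "orbit ?\<tau> i = {n..<n + l}" if "i \<in> {n..<n + l}" for i
    using orbit_eq_of_mem[OF perm_\<tau>] that by metis
  have "{..<n + l} = {..<n} \<union> {n..<n + l}"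
    by auto
  then have "perm_cycles (n + l) ?\<tau> = orbit ?\<tau> ` {..<n} \<union> orbit ?\<tau> ` {n..<n + l}"
    unfolding perm_cycles_eq_orbits[OF \<tau>] by (simp add: image_Un)
  also have "\<dots> = perm_cycles n \<sigma> \<union> {{n..<n + l}}"
    using low high assms(2) unfolding perm_cycles_eq_orbits[OF assms(1)] by force
  finally show ?thesis
    by simp
qed

lemma colored_cycle_type_add_cycle:
  assumes "(z, \<sigma>) \<in> gsym r n" "0 < l" "c < r"
  shows "(z(n := c), cycle_of_list [n..<n + l] \<circ> \<sigma>) \<in> gsym r (n + l)"
    and "colored_cycle_type r (n + l) (z(n := c), cycle_of_list [n..<n + l] \<circ> \<sigma>)
       = add_mset (l, c) (colored_cycle_type r n (z, \<sigma>))"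
proof -
  have \<sigma>: "\<sigma> permutes {..<n}" and z: "\<forall>i<n. z i < r" "\<forall>i\<ge>n. z i = 0"
    using assms(1) by (auto simp: gsym_def)
  have "cycle_of_list [n..<n + l] \<circ> \<sigma> permutes {..<n + l}"
    by (rule permutes_compose[OF permutes_subset[OF \<sigma>] permutes_subset[OF cycle_permutes]]) auto
  moreover have "z i < r" for i
    using z assms(3) by (cases "i < n") auto
  ultimately show "(z(n := c), cycle_of_list [n..<n + l] \<circ> \<sigma>) \<in> gsym r (n + l)"
    using z(2) assms(2,3) by (auto simp: gsym_def)
  have old_cycles: "C \<subseteq> {..<n}" if "C \<in> perm_cycles n \<sigma>" for C
    using that UN_perm_cycles[OF \<sigma>] by blast
  then have new_cycle: "{n..<n + l} \<notin> perm_cycles n \<sigma>"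
    using assms(2) by fastforce
  have "(\<Sum>i\<in>{n..<n + l}. (z(n := c)) i) = (\<Sum>i\<in>{n..<n + l}. if i = n then c else 0)"
    using z(2) by (intro sum.cong) auto
  then have color_new: "cycle_color r (z(n := c)) {n..<n + l} = c"
    unfolding cycle_color_def using assms(2,3) by simp
  have color_old: "cycle_color r (z(n := c)) C = cycle_color r z C" if "C \<in> perm_cycles n \<sigma>" for C
    unfolding cycle_color_def using old_cycles[OF that] by (intro arg_cong[where f="\<lambda>x. x mod r"] sum.cong) auto
  have "(\<Sum>C\<in>perm_cycles n \<sigma>. {#(card C, cycle_color r (z(n := c)) C)#})
      = colored_cycle_type r n (z, \<sigma>)"
    unfolding colored_cycle_type_def by (simp add: color_old)
  moreover have "finite (perm_cycles n \<sigma>)"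
    unfolding perm_cycles_eq_orbits[OF \<sigma>] by simp
  ultimately show "colored_cycle_type r (n + l) (z(n := c), cycle_of_list [n..<n + l] \<circ> \<sigma>)
       = add_mset (l, c) (colored_cycle_type r n (z, \<sigma>))"
    unfolding colored_cycle_type_def
    using new_cycle color_new by (simp add: perm_cycles_add_cycle[OF \<sigma> assms(2)])
qed

definition colored_partition :: "nat \<Rightarrow> (nat \<times> nat) multiset \<Rightarrow> bool"
  where "colored_partition r M \<longleftrightarrow> (\<forall>(l, c)\<in>#M. 0 < l \<and> c < r)"

lemma ex_colored_cycle_type:
  assumes "colored_partition r M"
  shows "\<exists>\<pi>\<in>gsym r (\<Sum>x\<in>#M. fst x). colored_cycle_type r (\<Sum>x\<in>#M. fst x) \<pi> = M"
  using assms
proof (induction M)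
  case empty
  have "(\<lambda>_. 0, id) \<in> gsym r 0"
    by (simp add: gsym_def permutes_id)
  moreover have "colored_cycle_type r 0 (\<lambda>_. 0, id) = {#}"
    by (simp add: colored_cycle_type_def perm_cycles_def)
  ultimately show ?case
    by auto
next
  case (add x M)
  obtain l c where x: "x = (l, c)" and lc: "0 < l" "c < r"
    using add.prems by (cases x) (auto simp: colored_partition_def)
  define n where "n = (\<Sum>x\<in>#M. fst x)"
  obtain z \<sigma> where "(z, \<sigma>) \<in> gsym r n" and "colored_cycle_type r n (z, \<sigma>) = M"
    using add.IH add.prems unfolding n_def by (auto simp: colored_partition_def)
  then have "(z(n := c), cycle_of_list [n..<n + l] \<circ> \<sigma>) \<in> gsym r (n + l)"
    and "colored_cycle_type r (n + l) (z(n := c), cycle_of_list [n..<n + l] \<circ> \<sigma>) = add_mset x M"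
    using colored_cycle_type_add_cycle[OF _ lc] x by simp_all
  moreover have "(\<Sum>x\<in>#add_mset x M. fst x) = n + l"
    unfolding n_def x by simp
  ultimately show ?case
    by metis
qed

section \<open>Square roots of coloured cycle types\<close>

definition even_multiplicities :: "nat \<Rightarrow> (nat \<times> nat) multiset \<Rightarrow> bool"
  where "even_multiplicities r L \<longleftrightarrow> (\<forall>k t. even k \<or> even r \<and> odd t \<longrightarrow> even (count L (k, t)))"

lemma even_multiplicities_square_parts: "even_multiplicities r (square_parts r x)"
  unfolding even_multiplicities_def
proof (intro allI impI)
  fix k t :: nat
  assume kt: "even k \<or> even r \<and> odd t"
  obtain l c where x: "x = (l, c)"
    by (cases x)
  have "(l, 2 * c mod r) \<noteq> (k, t)" if "odd l"
    using kt that by (auto simp: dvd_mod_iff)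
  then show "even (count (square_parts r x) (k, t))"
    unfolding x by auto
qed

lemma even_multiplicities_add:
  "even_multiplicities r L \<Longrightarrow> even_multiplicities r L' \<Longrightarrow> even_multiplicities r (L + L')"
  unfolding even_multiplicities_def by simp

lemma even_multiplicities_squared_type: "even_multiplicities r (squared_type r M)"
proof (induction M)
  case empty
  then show ?case
    by (simp add: squared_type_def even_multiplicities_def)
next
  case (add x M)
  then show ?case
    unfolding squared_type_def using even_multiplicities_add even_multiplicities_square_parts by simp
qed

lemma sum_fst_squared_type: "(\<Sum>x\<in>#squared_type r M. fst x) = (\<Sum>x\<in>#M. fst x)"
proof (induction M)
  case (add x M)
  obtain l c where "x = (l, c)"
    by (cases x)
  with add show ?case
    by (auto simp: squared_type_def elim!: evenE)
qed (simp add: squared_type_def)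

lemma ex_half_color:
  fixes t r :: nat
  assumes "t < r" "odd r \<or> even t"
  shows "\<exists>c<r. 2 * c mod r = t"
proof (cases "even t")
  case True
  then show ?thesis
    using assms(1) by (intro exI[of _ "t div 2"]) auto
next
  case False
  then have "odd r"
    using assms(2) by simp
  then have "2 * ((t + r) div 2) = t + r"
    using False by simp
  then show ?thesis
    using assms(1) by (intro exI[of _ "(t + r) div 2"]) auto
qed

lemma ex_square_parts_subset:
  assumes "colored_partition r L" "even_multiplicities r L" "L \<noteq> {#}"
  shows "\<exists>y. colored_partition r {#y#} \<and> square_parts r y \<subseteq># L"
proof -
  obtain k t where kt: "(k, t) \<in># L"
    using assms(3) by (metis multiset_nonemptyE surj_pair)
  then have "0 < k" "t < r"
    using assms(1) by (auto simp: colored_partition_def)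
  show ?thesis
  proof (cases "even k \<or> even r \<and> odd t")
    case True
    then have "even (count L (k, t))"
      using assms(2) unfolding even_multiplicities_def by blast
    moreover have "0 < count L (k, t)"
      using kt by simp
    ultimately have "2 \<le> count L (k, t)"
      by presburger
    then have "square_parts r (2 * k, t) \<subseteq># L"
      by (auto simp: subseteq_mset_def)
    then show ?thesis
      using \<open>0 < k\<close> \<open>t < r\<close> by (intro exI[of _ "(2 * k, t)"]) (simp add: colored_partition_def)
  next
    case False
    then obtain c where "c < r" "2 * c mod r = t"
      using ex_half_color[OF \<open>t < r\<close>] by blast
    then have "square_parts r (k, c) \<subseteq># L"
      using False kt by simp
    then show ?thesis
      using \<open>0 < k\<close> \<open>c < r\<close> by (intro exI[of _ "(k, c)"]) (simp add: colored_partition_def)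
  qed
qed

lemma ex_squared_type_root:
  assumes "colored_partition r L" "even_multiplicities r L"
  shows "\<exists>M. colored_partition r M \<and> squared_type r M = L"
  using assms
proof (induction "size L" arbitrary: L rule: less_induct)
  case less
  show ?case
  proof (cases "L = {#}")
    case True
    then show ?thesis
      by (intro exI[of _ "{#}"]) (simp add: colored_partition_def squared_type_def)
  next
    case False
    then obtain y where y: "colored_partition r {#y#}" and sub: "square_parts r y \<subseteq># L"
      using ex_square_parts_subset[OF less.prems] by blast
    define L' where "L' = L - square_parts r y"
    have "0 < size (square_parts r y)"
      by (cases y) simp
    then have "size L' < size L"
      unfolding L'_def using size_Diff_submset[OF sub] size_mset_mono[OF sub] by simp
    moreover have "colored_partition r L'"
      using less.prems(1) unfolding L'_def colored_partition_def by (auto dest: in_diffD)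
    moreover have "even_multiplicities r L'"
      using less.prems(2) even_multiplicities_square_parts[of r y]
      unfolding L'_def even_multiplicities_def by simp
    ultimately obtain M' where "colored_partition r M'" "squared_type r M' = L'"
      using less.hyps by blast
    then show ?thesis
      using y sub unfolding L'_def
      by (intro exI[of _ "add_mset y M'"]) (auto simp: colored_partition_def squared_type_def)
  qed
qed

theorem ex_square_with_colored_cycle_type_iff:
  assumes "colored_partition r L"
  defines "n \<equiv> \<Sum>x\<in>#L. fst x"
  shows "(\<exists>\<pi>\<in>gsym r n. colored_cycle_type r n (gmult r n \<pi> \<pi>) = L) \<longleftrightarrow> even_multiplicities r L"
proof
  assume "\<exists>\<pi>\<in>gsym r n. colored_cycle_type r n (gmult r n \<pi> \<pi>) = L"
  then show "even_multiplicities r L"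
    using colored_cycle_type_square even_multiplicities_squared_type by metis
next
  assume "even_multiplicities r L"
  then obtain M where M: "colored_partition r M" "squared_type r M = L"
    using ex_squared_type_root[OF assms(1)] by blast
  then have "(\<Sum>x\<in>#M. fst x) = n"
    unfolding n_def using sum_fst_squared_type by metis
  then obtain \<pi> where "\<pi> \<in> gsym r n" "colored_cycle_type r n \<pi> = M"
    using ex_colored_cycle_type[OF M(1)] by metis
  then show "\<exists>\<pi>\<in>gsym r n. colored_cycle_type r n (gmult r n \<pi> \<pi>) = L"
    using colored_cycle_type_square M(2) by metis
qed

section \<open>From coloured cycle types to r-partite partitions\<close>

lemma count_cycle_type:
  "count (cycle_type r n \<pi> t) k = count (colored_cycle_type r n \<pi>) (k, t)"
proof -
  let ?g = "\<lambda>C. (card C, cycle_color r (fst \<pi>) C)"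
  have "finite (perm_cycles n (snd \<pi>))"
    unfolding perm_cycles_def by simp
  then have "colored_cycle_type r n \<pi> = image_mset ?g (mset_set (perm_cycles n (snd \<pi>)))"
    unfolding colored_cycle_type_def by (induction rule: finite_induct) auto
  moreover have "count (image_mset card (filter_mset (\<lambda>C. cycle_color r (fst \<pi>) C = t) N)) k
      = count (image_mset ?g N) (k, t)" for N
    by (induction N) auto
  ultimately show ?thesis
    unfolding cycle_type_def filter_mset_mset_set[OF \<open>finite (perm_cycles n (snd \<pi>))\<close>, symmetric]
    by simp
qed

definition colored_parts :: "nat \<Rightarrow> (nat \<Rightarrow> nat multiset) \<Rightarrow> (nat \<times> nat) multiset"
  where "colored_parts r lam = (\<Sum>t<r. image_mset (\<lambda>k. (k, t)) (lam t))"

lemma count_colored_parts: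
  "count (colored_parts r lam) (k, t) = (if t < r then count (lam t) k else 0)"
proof -
  have "count (image_mset (\<lambda>k. (k, t')) N) (k, t) = (if t = t' then count N k else 0)" for t' N
    by (induction N) auto
  then show ?thesis
    unfolding colored_parts_def by (induction r) auto
qed

lemma colored_partition_colored_parts:
  assumes "r_partite_partition r n lam"
  shows "colored_partition r (colored_parts r lam)" and "(\<Sum>x\<in>#colored_parts r lam. fst x) = n"
proof -
  show "colored_partition r (colored_parts r lam)"
    unfolding colored_partition_def
  proof (clarify)
    fix l c assume "(l, c) \<in># colored_parts r lam"
    then have "0 < count (colored_parts r lam) (l, c)"
      by simp
    then have "c < r \<and> l \<in># lam c"
      unfolding count_colored_parts by (simp split: if_splits)
    then show "0 < l \<and> c < r"
      using assms unfolding r_partite_partition_def by (auto intro: gr0I)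
  qed
  have "(\<Sum>x\<in>#colored_parts r lam. fst x) = (\<Sum>t<r. sum_mset (lam t))"
    unfolding colored_parts_def by (induction r) (simp_all add: image_mset.compositionality comp_def)
  then show "(\<Sum>x\<in>#colored_parts r lam. fst x) = n"
    using assms unfolding r_partite_partition_def by simp
qed

lemma cycle_type_eq_iff_colored_cycle_type:
  assumes "0 < r"
  shows "(\<forall>t<r. cycle_type r n \<pi> t = lam t) \<longleftrightarrow> colored_cycle_type r n \<pi> = colored_parts r lam"
proof -
  have "cycle_type r n \<pi> t = {#}" if "r \<le> t" for t
    using that assms unfolding cycle_type_def cycle_color_def
    by (simp add: mset_set_empty_iff) (metis mod_less_divisor leD)
  then have "count (colored_cycle_type r n \<pi>) (k, t) = 0" if "r \<le> t" for k t
    using that count_cycle_type by (metis count_empty)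
  then show ?thesis
    unfolding multiset_eq_iff by (auto simp: count_colored_parts count_cycle_type[symmetric] not_less)
qed

theorem proposition6p3:
  fixes r n :: nat and lam :: "nat \<Rightarrow> nat multiset"
  assumes "r \<ge> 1" and "r_partite_partition r n lam"
  shows "(\<exists>\<pi>\<in>gsym r n. \<forall>t<r. cycle_type r n (gmult r n \<pi> \<pi>) t = lam t)
    \<longleftrightarrow> ((\<forall>t<r. \<forall>k. even k \<longrightarrow> even (count (lam t) k))
        \<and> (even r \<longrightarrow> (\<forall>t<r. odd t \<longrightarrow> (\<forall>k. odd k \<longrightarrow> even (count (lam t) k)))))"
proof -
  have "0 < r"
    using assms(1) by simp
  let ?L = "colored_parts r lam"
  have "(\<exists>\<pi>\<in>gsym r n. \<forall>t<r. cycle_type r n (gmult r n \<pi> \<pi>) t = lam t)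
      \<longleftrightarrow> (\<exists>\<pi>\<in>gsym r n. colored_cycle_type r n (gmult r n \<pi> \<pi>) = ?L)"
    using cycle_type_eq_iff_colored_cycle_type[OF \<open>0 < r\<close>] by blast
  also have "\<dots> \<longleftrightarrow> even_multiplicities r ?L"
    using ex_square_with_colored_cycle_type_iff colored_partition_colored_parts[OF assms(2)] by metis
  also have "\<dots> \<longleftrightarrow> (\<forall>t<r. \<forall>k. even k \<longrightarrow> even (count (lam t) k))
        \<and> (even r \<longrightarrow> (\<forall>t<r. odd t \<longrightarrow> (\<forall>k. odd k \<longrightarrow> even (count (lam t) k))))"
    unfolding even_multiplicities_def count_colored_parts by auto
  finally show ?thesis .
qed

end
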